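(* Let $d>0$, $r_C>0$, and let $\mathcal{C}=\{(x,y,r_C): |x|\le d,\ |y|\le d\}$ be the square of half-width $d$ centered at $(0,0,r_C)$ in the plane $z=r_C$, with unit normal $\mathbf{e}_z$. Let $l\ge1$ and $-l\le m\le l$ be integers. If $m$ is not a multiple of $4$ (i.e. $m$ is odd, or $m=2k$ with $k$ odd), then $$v_{lm}:=\int_{\mathcal{C}}\frac{\boldsymbol{\nu}_{lm}(\theta,\phi)}{R^{l+2}}\cdot\mathbf{e}_z\,dS=0.$$
   Context: $(R,\theta,\phi)$ are spherical coordinates of $(x,y,r_C)$: $R=\sqrt{x^2+y^2+r_C^2}$, $\theta=\arccos(r_C/R)$, $\phi$ the azimuthal angle of $(x,y)$; $\mathbf{e}_R,\mathbf{e}_\theta,\mathbf{e}_\phi$ the spherical orthonormal frame. $Y_{lm}(\theta,\phi)=\sqrt{\frac{2l+1}{4\pi}\frac{(l-m)!}{(l+m)!}}\,e^{im\phi}P_l^m(\cos\theta)$ with $P_l^m(x)=\frac{(-1)^m}{2^l l!}(1-x^2)^{m/2}\frac{d^{m+l}}{dx^{m+l}}(x^2-1)^l$, and $\boldsymbol{\nu}_{lm}=-(l+1)Y_{lm}\mathbf{e}_R+\frac{\partial Y_{lm}}{\partial\theta}\mathbf{e}_\theta+\frac{imY_{lm}}{\sin\theta}\mathbf{e}_\phi$. *)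

theory Defs
  imports "HOL-Analysis.Analysis"
begin

definition assoc_legendre :: "nat \<Rightarrow> int \<Rightarrow> real \<Rightarrow> real" where
  "assoc_legendre l m x =
     ((-1) powi m) / (2 ^ l * fact l) * (1 - x\<^sup>2) powr (real_of_int m / 2)
     * ((deriv ^^ nat (m + int l)) (\<lambda>t. (t\<^sup>2 - 1) ^ l)) x"

definition sph_Y :: "nat \<Rightarrow> int \<Rightarrow> real \<Rightarrow> real \<Rightarrow> complex" where
  "sph_Y l m \<theta> \<phi> =
     complex_of_real (sqrt ((2 * real l + 1) / (4 * pi)
        * (fact (nat (int l - m)) / fact (nat (int l + m)))))
     * cis (real_of_int m * \<phi>) * complex_of_real (assoc_legendre l m (cos \<theta>))"

definition e_R :: "real \<Rightarrow> real \<Rightarrow> real^3" where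
  "e_R \<theta> \<phi> = vector [sin \<theta> * cos \<phi>, sin \<theta> * sin \<phi>, cos \<theta>]"
definition e_theta :: "real \<Rightarrow> real \<Rightarrow> real^3" where
  "e_theta \<theta> \<phi> = vector [cos \<theta> * cos \<phi>, cos \<theta> * sin \<phi>, - sin \<theta>]"
definition e_phi :: "real \<Rightarrow> real \<Rightarrow> real^3" where
  "e_phi \<theta> \<phi> = vector [- sin \<phi>, cos \<phi>, 0]"
definition e_z :: "real^3" where
  "e_z = vector [0, 0, 1]"

definition cscale :: "complex \<Rightarrow> real^3 \<Rightarrow> complex^3" where
  "cscale c v = (\<chi> i. c * complex_of_real (v $ i))"
definition cdot :: "complex^3 \<Rightarrow> real^3 \<Rightarrow> complex" where
  "cdot v e = (\<Sum>i\<in>UNIV. v $ i * complex_of_real (e $ i))"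

definition nu :: "nat \<Rightarrow> int \<Rightarrow> real \<Rightarrow> real \<Rightarrow> complex^3" where
  "nu l m \<theta> \<phi> =
     cscale (- (of_nat l + 1) * sph_Y l m \<theta> \<phi>) (e_R \<theta> \<phi>)
   + cscale (vector_derivative (\<lambda>t. sph_Y l m t \<phi>) (at \<theta>)) (e_theta \<theta> \<phi>)
   + cscale (\<i> * of_int m * sph_Y l m \<theta> \<phi> / complex_of_real (sin \<theta>)) (e_phi \<theta> \<phi>)"

definition sphR :: "real \<Rightarrow> real \<Rightarrow> real \<Rightarrow> real" where
  "sphR rC x y = sqrt (x\<^sup>2 + y\<^sup>2 + rC\<^sup>2)"
definition sphTheta :: "real \<Rightarrow> real \<Rightarrow> real \<Rightarrow> real" where
  "sphTheta rC x y = arccos (rC / sphR rC x y)"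
definition sphPhi :: "real \<Rightarrow> real \<Rightarrow> real" where
  "sphPhi x y = Arg (Complex x y)"

text \<open>Integrand on the square C (surface element dS = dx dy, normal e_z).\<close>
definition v_integrand :: "nat \<Rightarrow> int \<Rightarrow> real \<Rightarrow> real \<times> real \<Rightarrow> complex" where
  "v_integrand l m rC p = (case p of (x, y) \<Rightarrow>
     cdot (nu l m (sphTheta rC x y) (sphPhi x y)) e_z
       / complex_of_real (sphR rC x y ^ (l + 2)))"

end

theory Submission
  imports Defs "HOL-Computational_Algebra.Polynomial"
begin

(* Off the origin the integrand is  N sgn(x + iy)^m F(r_C / R) / R^(l+2),  where
   F(u) = (1 - u^2) P_l^m'(u) - (l + 1) u P_l^m(u)  is the e_z-component of nu_lm at cos theta = u.
   The quarter turn (x, y) |-> (-y, x) maps the square onto itself and preserves R, but multiplies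
   sgn(x + iy)^m by i^m; hence the integral I satisfies I = i^m I, and i^m <> 1 unless 4 divides m.
   For integrability, F(u) = c (1 - u^2)^(m/2) W(u) with a polynomial W; when m < 0 the
   Rodrigues formula leaves a factor (u - 1)^(-m) in W, so F stays bounded as u -> 1, i.e. at the
   origin, and the integrand is bounded and continuous off the origin. *)

lemma power_dvd_pderiv:
  fixes p q :: "'a::idom poly"
  assumes "q ^ Suc j dvd p"
  shows "q ^ j dvd pderiv p"
proof -
  from assms obtain r where r: "p = q ^ Suc j * r" by (auto elim: dvdE)
  have "pderiv p = q ^ j * (smult (of_nat (Suc j)) (pderiv q) * r + q * pderiv r)"
    unfolding r pderiv_mult pderiv_power_Suc by (simp add: algebra_simps)
  then show ?thesis by simp
qed

lemma power_dvd_funpow_pderiv: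
  fixes p q :: "'a::idom poly"
  assumes "q ^ (j + i) dvd p"
  shows "q ^ j dvd (pderiv ^^ i) p"
  using assms
proof (induction i arbitrary: j)
  case (Suc i)
  then have "q ^ Suc j dvd (pderiv ^^ i) p" using Suc.IH[of "Suc j"] by simp
  then show ?case by (simp add: power_dvd_pderiv)
qed simp

lemma power_dvd_add_mult_pderiv:
  fixes p q a b :: "'a::idom poly"
  assumes "q ^ n dvd p" and "q dvd b"
  shows "q ^ n dvd a * p + b * pderiv p"
proof (cases n)
  case (Suc j)
  with assms have "q ^ j * q dvd pderiv p * b"
    by (intro mult_dvd_mono power_dvd_pderiv) auto
  with Suc assms(1) show ?thesis
    by (simp add: dvd_add mult.commute)
qed simp

lemma deriv_funpow_poly: "(deriv ^^ k) (poly (p :: real poly)) = poly ((pderiv ^^ k) p)"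
proof (induction k)
  case (Suc k)
  have "deriv (poly q) = poly (pderiv q)" for q :: "real poly"
    by (rule ext, rule DERIV_imp_deriv, rule poly_DERIV)
  with Suc show ?case by simp
qed simp

definition rodrigues_poly :: "nat \<Rightarrow> int \<Rightarrow> real poly" where
  "rodrigues_poly l m = (pderiv ^^ nat (m + int l)) ([:-1, 0, 1:] ^ l)"

lemma assoc_legendre_eq_poly:
  "assoc_legendre l m x =
     (-1) powi m / (2 ^ l * fact l) * (1 - x\<^sup>2) powr (of_int m / 2) * poly (rodrigues_poly l m) x"
proof -
  have "(\<lambda>t::real. (t\<^sup>2 - 1) ^ l) = poly ([:-1, 0, 1:] ^ l)"
    by (rule ext) (simp add: poly_power power2_eq_square algebra_simps)
  then show ?thesis
    by (simp add: assoc_legendre_def rodrigues_poly_def deriv_funpow_poly)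
qed

lemma dvd_rodrigues_poly:
  assumes "- int l \<le> m"
  shows "[:-1, 1:] ^ nat (- m) dvd rodrigues_poly l m"
proof (cases "m \<le> 0")
  case True
  have "([:-1, 0, 1:] :: real poly) ^ l = [:-1, 1:] ^ l * [:1, 1:] ^ l"
    by (simp flip: power_mult_distrib)
  then have "[:-1, 1:] ^ (nat (- m) + nat (m + int l)) dvd ([:-1, 0, 1:] ^ l :: real poly)"
    using True assms by (simp add: nat_add_distrib[symmetric])
  then show ?thesis
    unfolding rodrigues_poly_def by (rule power_dvd_funpow_pderiv)
qed simp

definition legendre_flux_poly :: "nat \<Rightarrow> int \<Rightarrow> real poly" where
  "legendre_flux_poly l m =
     smult (- (real l + 1 + of_int m)) (pCons 0 (rodrigues_poly l m))
     + [:1, 0, -1:] * pderiv (rodrigues_poly l m)"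

lemma dvd_legendre_flux_poly:
  assumes "- int l \<le> m"
  shows "[:-1, 1:] ^ nat (- m) dvd legendre_flux_poly l m"
proof -
  have "smult a (pCons 0 p) = [:0, a:] * p" for a and p :: "real poly" by simp
  moreover have "[:-1, 1:] dvd ([:1, 0, -1:] :: real poly)"
    by (rule dvdI[of _ _ "[:-1, -1:]"]) simp
  ultimately show ?thesis
    unfolding legendre_flux_poly_def
    by (metis power_dvd_add_mult_pderiv dvd_rodrigues_poly[OF assms])
qed

text \<open>With \<open>u = cos \<theta>\<close> this is \<open>(1 - u^2) P_l^m'(u) - (l + 1) u P_l^m(u)\<close>
  (lemma \<open>assoc_legendre_has_derivative_flux\<close>), i.e. the \<open>e_z\<close>-component of \<open>\<nu>_lm\<close> without
  the factor \<open>e^(im\<phi>)\<close> and the normalisation of \<open>Y_lm\<close>.\<close>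
definition legendre_flux :: "nat \<Rightarrow> int \<Rightarrow> real \<Rightarrow> real" where
  "legendre_flux l m u =
     (-1) powi m / (2 ^ l * fact l) * (1 - u\<^sup>2) powr (of_int m / 2) * poly (legendre_flux_poly l m) u"

lemma assoc_legendre_has_derivative_flux:
  assumes "\<bar>u\<bar> < 1"
  obtains D where "(assoc_legendre l m has_real_derivative D) (at u)"
    and "(1 - u\<^sup>2) * D - (real l + 1) * u * assoc_legendre l m u = legendre_flux l m u"
proof -
  define c :: real where "c = (-1) powi m / (2 ^ l * fact l)"
  define e :: real where "e = of_int m / 2"
  define Q where "Q = rodrigues_poly l m"
  have pos: "1 - u\<^sup>2 > 0" using assms by (simp add: abs_square_less_1)
  define D where "D = c * (e * (1 - u\<^sup>2) powr (e - 1) * (- 2 * u) * poly Q u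
                         + (1 - u\<^sup>2) powr e * poly (pderiv Q) u)"
  have "assoc_legendre l m = (\<lambda>x. c * (1 - x\<^sup>2) powr e * poly Q x)"
    by (simp add: assoc_legendre_eq_poly c_def e_def Q_def fun_eq_iff)
  moreover have "((\<lambda>x. c * (1 - x\<^sup>2) powr e * poly Q x) has_real_derivative D) (at u)"
    unfolding D_def using pos by (auto intro!: derivative_eq_intros simp: algebra_simps)
  moreover have "(1 - u\<^sup>2) * D - (real l + 1) * u * (c * (1 - u\<^sup>2) powr e * poly Q u)
      = legendre_flux l m u"
  proof -
    have "(1 - u\<^sup>2) * D = c * (e * ((1 - u\<^sup>2) * (1 - u\<^sup>2) powr (e - 1)) * (- 2 * u) * poly Q u
                              + (1 - u\<^sup>2) * (1 - u\<^sup>2) powr e * poly (pderiv Q) u)"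
      unfolding D_def by (simp add: algebra_simps)
    also have "(1 - u\<^sup>2) * (1 - u\<^sup>2) powr (e - 1) = (1 - u\<^sup>2) powr e"
      using pos by (simp add: powr_diff)
    finally have wD: "(1 - u\<^sup>2) * D
        = c * (- 2 * e * u * poly Q u + (1 - u\<^sup>2) * poly (pderiv Q) u) * (1 - u\<^sup>2) powr e"
      by (simp add: algebra_simps)
    have "legendre_flux l m u = c * (1 - u\<^sup>2) powr e * poly (legendre_flux_poly l m) u"
      by (simp add: legendre_flux_def c_def e_def)
    then show ?thesis
      unfolding wD legendre_flux_poly_def Q_def[symmetric]
      by (simp add: e_def algebra_simps power2_eq_square)
  qed
  ultimately show ?thesis using that by simp
qed

definition sph_norm :: "nat \<Rightarrow> int \<Rightarrow> real" where
  "sph_norm l m =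
     sqrt ((2 * real l + 1) / (4 * pi) * (fact (nat (int l - m)) / fact (nat (int l + m))))"

lemma sph_Y_eq:
  "sph_Y l m \<theta> \<phi> = of_real (sph_norm l m) * cis (of_int m * \<phi>) * of_real (assoc_legendre l m (cos \<theta>))"
  by (simp add: sph_Y_def sph_norm_def)

lemma cdot_e_z: "cdot v e_z = v $ 3"
  by (simp add: cdot_def e_z_def sum_3)

text \<open>The \<open>e_\<phi>\<close>-term of \<open>\<nu>_lm\<close> has no \<open>e_z\<close>-component.\<close>
lemma cdot_nu_e_z:
  assumes "(assoc_legendre l m has_real_derivative D) (at (cos \<theta>))"
  shows "cdot (nu l m \<theta> \<phi>) e_z = of_real (sph_norm l m) * cis (of_int m * \<phi>)
           * of_real ((sin \<theta>)\<^sup>2 * D - (real l + 1) * cos \<theta> * assoc_legendre l m (cos \<theta>))"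
proof -
  define A where "A = of_real (sph_norm l m) * cis (of_int m * \<phi>)"
  have "((\<lambda>t. assoc_legendre l m (cos t)) has_real_derivative D * - sin \<theta>) (at \<theta>)"
    using DERIV_chain2[OF assms DERIV_cos] .
  then have "((\<lambda>t. sph_Y l m t \<phi>) has_vector_derivative A * of_real (D * - sin \<theta>)) (at \<theta>)"
    unfolding sph_Y_eq A_def by (intro has_vector_derivative_mult_right has_vector_derivative_of_real)
  then have "vector_derivative (\<lambda>t. sph_Y l m t \<phi>) (at \<theta>) = A * of_real (D * - sin \<theta>)"
    by (rule vector_derivative_at)
  then show ?thesis
    unfolding cdot_e_z nu_def
    by (simp add: cscale_def e_R_def e_theta_def e_phi_def sph_Y_eq A_def
                  algebra_simps power2_eq_square)
qed

lemma cdot_nu_e_z_legendre_flux: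
  assumes "sin \<theta> \<noteq> 0"
  shows "cdot (nu l m \<theta> \<phi>) e_z
           = of_real (sph_norm l m) * cis (of_int m * \<phi>) * of_real (legendre_flux l m (cos \<theta>))"
proof -
  have "(cos \<theta>)\<^sup>2 < 1" using assms by (simp add: cos_squared_eq)
  then obtain D where "(assoc_legendre l m has_real_derivative D) (at (cos \<theta>))"
    and "(1 - (cos \<theta>)\<^sup>2) * D - (real l + 1) * cos \<theta> * assoc_legendre l m (cos \<theta>)
         = legendre_flux l m (cos \<theta>)"
    by (rule assoc_legendre_has_derivative_flux[unfolded abs_square_less_1[symmetric]])
  then show ?thesis by (simp add: cdot_nu_e_z sin_squared_eq)
qed

text \<open>For \<open>m < 0\<close> the product is \<open>((1 - u) / (1 + u)) powr (-m/2)\<close>: the factor \<open>(u - 1)^(-m)\<close>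
  supplied by \<open>dvd_legendre_flux_poly\<close> cancels the singularity at \<open>u = 1\<close>.\<close>
lemma abs_powr_mult_power_le_1:
  fixes u :: real
  assumes "0 \<le> u" "u < 1"
  shows "\<bar>(1 - u\<^sup>2) powr (of_int m / 2) * (u - 1) ^ nat (- m)\<bar> \<le> 1"
proof (cases "m \<ge> 0")
  case True
  have "(1 - u\<^sup>2) powr (of_int m / 2) \<le> 1"
    using True assms by (intro powr_le1) (auto simp: abs_le_iff power_le_one)
  with True show ?thesis by simp
next
  case False
  define n where "n = nat (- m)"
  have m: "of_int m / 2 = - (real n / 2)" using False by (simp add: n_def)
  have sq: "(1 - u) powr 2 = (1 - u)\<^sup>2"
    using powr_realpow[of "1 - u" 2] assms by simp
  have "((1 - u)\<^sup>2) powr (real n / 2) = (1 - u) powr real n"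
    unfolding sq[symmetric] powr_powr by simp
  also have "\<dots> = \<bar>(u - 1) ^ n\<bar>"
    using assms by (simp add: powr_realpow power_abs)
  finally have abs_pow: "\<bar>(u - 1) ^ n\<bar> = ((1 - u)\<^sup>2) powr (real n / 2)" by (rule sym)
  have "\<bar>(1 - u\<^sup>2) powr (of_int m / 2) * (u - 1) ^ n\<bar>
      = ((1 - u)\<^sup>2) powr (real n / 2) / (1 - u\<^sup>2) powr (real n / 2)"
    unfolding abs_mult abs_pow m powr_minus by (auto simp: field_simps)
  also have "\<dots> = ((1 - u)\<^sup>2 / (1 - u\<^sup>2)) powr (real n / 2)"
    using assms by (simp add: powr_divide abs_square_le_1)
  also have "\<dots> \<le> 1"
  proof (rule powr_le1)
    have "(1 - u)\<^sup>2 \<le> 1 - u\<^sup>2"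
      using assms by (simp add: power2_eq_square algebra_simps mult_left_le_one_le)
    moreover have "0 < 1 - u\<^sup>2"
      using assms by (simp add: power_less_one_iff abs_square_less_1)
    ultimately show "\<bar>(1 - u)\<^sup>2 / (1 - u\<^sup>2)\<bar> \<le> 1"
      by simp
  qed simp
  finally show ?thesis unfolding n_def .
qed

lemma bounded_legendre_flux:
  assumes "- int l \<le> m"
  shows "bounded (legendre_flux l m ` {0..<1})"
proof -
  obtain r where r: "legendre_flux_poly l m = [:-1, 1:] ^ nat (- m) * r"
    using dvd_legendre_flux_poly[OF assms] by (auto elim: dvdE)
  have "compact (poly r ` {0..1})"
    by (intro compact_continuous_image continuous_intros) auto
  then obtain B where B: "\<forall>u\<in>{0..1}. \<bar>poly r u\<bar> \<le> B"
    by (auto dest!: compact_imp_bounded simp: bounded_real)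
  have "\<bar>legendre_flux l m u\<bar> \<le> \<bar>(-1) powi m / (2 ^ l * fact l)\<bar> * B" if u: "u \<in> {0..<1}" for u
  proof -
    have "\<bar>legendre_flux l m u\<bar> = \<bar>(-1) powi m / (2 ^ l * fact l)\<bar>
        * \<bar>(1 - u\<^sup>2) powr (of_int m / 2) * (u - 1) ^ nat (- m)\<bar> * \<bar>poly r u\<bar>"
      by (simp add: legendre_flux_def r poly_power abs_mult)
    also have "\<dots> \<le> \<bar>(-1) powi m / (2 ^ l * fact l)\<bar> * 1 * B"
      using u B abs_powr_mult_power_le_1[of u m]
      by (intro mult_mono mult_left_mono) auto
    finally show ?thesis by simp
  qed
  then show ?thesis unfolding bounded_real by blast
qed

lemma continuous_on_legendre_flux: "continuous_on {-1<..<1} (legendre_flux l m)"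
  unfolding legendre_flux_def
  by (intro continuous_intros) (auto simp: power2_eq_1_iff)

lemma integrable_on_cbox_if_bounded_continuous_off_point:
  fixes f :: "'a::euclidean_space \<Rightarrow> 'b::euclidean_space"
  assumes "continuous_on (cbox a b - {c}) f" and "bounded (f ` (cbox a b - {c}))"
  shows "f integrable_on cbox a b"
proof -
  obtain B where B: "\<And>x. x \<in> cbox a b - {c} \<Longrightarrow> norm (f x) \<le> B"
    using assms(2) by (auto simp: bounded_iff)
  have S: "cbox a b - {c} \<in> sets lebesgue" by (intro sets.Diff) auto
  have "f integrable_on cbox a b - {c}"
  proof (rule measurable_bounded_by_integrable_imp_integrable)
    show "f \<in> borel_measurable (lebesgue_on (cbox a b - {c}))"
      using assms(1) S by (rule continuous_imp_measurable_on_sets_lebesgue)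
    show "(\<lambda>_. B) integrable_on cbox a b - {c}"
      by (intro integrable_on_const fmeasurable_Diff) auto
  qed (use B S in auto)
  then show ?thesis
    by (rule integrable_spike_set) (auto intro: negligible_subset[OF negligible_sing])
qed

lemma rotate_image_cbox:
  fixes a1 a2 b1 b2 :: real
  shows "(\<lambda>(x, y). (- y, x)) ` cbox (a1, a2) (b1, b2) = cbox (- b2, a1) (- a2, b1)"
  by (auto simp: cbox_Pair_eq image_iff
           intro!: bexI[where x = "(snd p, - fst p)" for p] bexI[where x = "- t" for t :: real])

lemma rotate_inv_image_cbox:
  fixes a1 a2 b1 b2 :: real
  shows "(\<lambda>(x, y). (y, - x)) ` cbox (a1, a2) (b1, b2) = cbox (a2, - b1) (b2, - a1)"
  by (auto simp: cbox_Pair_eq image_iff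
           intro!: bexI[where x = "(- snd p, fst p)" for p] bexI[where x = "- t" for t :: real])

lemma has_integral_rotate_square:
  fixes f :: "real \<times> real \<Rightarrow> 'a::banach"
  assumes "(f has_integral I) (cbox (- d, - d) (d, d))"
  shows "((\<lambda>(x, y). f (- y, x)) has_integral I) (cbox (- d, - d) (d, d))"
proof -
  have "((\<lambda>p. f ((\<lambda>(x, y). (- y, x)) p)) has_integral (1 / 1) *\<^sub>R I)
          ((\<lambda>(x, y). (y, - x)) ` cbox (- d, - d) (d, d))"
  proof (rule has_integral_twiddle[OF _ _ _ _ _ _ _ assms])
    show "\<exists>w z. (\<lambda>(x, y). (- y, x)) ` cbox u v = cbox w z" for u v :: "real \<times> real"
      by (cases u; cases v) (auto simp: rotate_image_cbox)
    show "\<exists>w z. (\<lambda>(x, y). (y, - x)) ` cbox u v = cbox w z" for u v :: "real \<times> real"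
      by (cases u; cases v) (auto simp: rotate_inv_image_cbox)
    show "Henstock_Kurzweil_Integration.content ((\<lambda>(x, y). (- y, x)) ` cbox u v)
        = 1 * Henstock_Kurzweil_Integration.content (cbox u v)" for u v :: "real \<times> real"
      by (cases u; cases v) (simp add: rotate_image_cbox content_Pair)
    show "continuous (at p) (\<lambda>(x, y). (- y, x :: real))" for p :: "real \<times> real"
      by (simp add: case_prod_beta')
  qed auto
  then show ?thesis
    unfolding rotate_inv_image_cbox by (simp add: case_prod_beta')
qed

lemma has_integral_zero_by_rotation:
  fixes f :: "real \<times> real \<Rightarrow> complex"
  assumes "f integrable_on cbox (- d, - d) (d, d)"
    and "\<And>x y. f (- y, x) = \<omega> * f (x, y)" and "\<omega> \<noteq> 1"
  shows "(f has_integral 0) (cbox (- d, - d) (d, d))"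
proof -
  define I where "I = integral (cbox (- d, - d) (d, d)) f"
  have I: "(f has_integral I) (cbox (- d, - d) (d, d))"
    using assms(1) unfolding I_def by auto
  have "((\<lambda>p. \<omega> * f p) has_integral I) (cbox (- d, - d) (d, d))"
    using has_integral_rotate_square[OF I] by (simp add: assms(2) case_prod_beta')
  moreover have "((\<lambda>p. \<omega> * f p) has_integral \<omega> * I) (cbox (- d, - d) (d, d))"
    using I by (rule has_integral_mult_right)
  ultimately have "I = \<omega> * I"
    by (rule has_integral_unique)
  then have "(\<omega> - 1) * I = 0"
    by (simp add: algebra_simps)
  with assms(3) I show ?thesis
    by simp
qed

lemma power_int_ii_neq_1:
  assumes "\<not> 4 dvd m"
  shows "\<i> powi m \<noteq> 1"
proof -
  have "\<i> powi m = \<i> powi (4 * (m div 4)) * \<i> powi (m mod 4)"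
    by (subst power_int_add[symmetric]) auto
  also have "\<i> powi (4 * (m div 4)) = (1 :: complex)"
    by (simp add: power_int_mult)
  finally have "\<i> powi m = \<i> powi (m mod 4)" by simp
  moreover have "m mod 4 \<in> {1, 2, 3}"
    using assms by (auto simp: dvd_eq_mod_eq_0)
  ultimately show ?thesis
    by (auto simp: power_int_def eval_nat_numeral complex_eq_iff)
qed

lemma sphR_gt:
  assumes "rC > 0" and "(x, y) \<noteq> 0"
  shows "rC < sphR rC x y"
proof -
  have "rC\<^sup>2 < x\<^sup>2 + y\<^sup>2 + rC\<^sup>2"
    using assms(2) by (auto simp: sum_power2_gt_zero_iff zero_prod_def)
  then have "sqrt (rC\<^sup>2) < sphR rC x y"
    unfolding sphR_def by (rule real_sqrt_less_mono)
  with assms(1) show ?thesis by simp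
qed

text \<open>The azimuthal factor \<open>e^(im\<phi>)\<close> is written as \<open>sgn (x + iy) ^ m\<close>, which turns the
  quarter turn of the square into multiplication by \<open>\<i>^m\<close>.\<close>
definition v_density :: "nat \<Rightarrow> int \<Rightarrow> real \<Rightarrow> real \<times> real \<Rightarrow> complex" where
  "v_density l m rC p = (case p of (x, y) \<Rightarrow>
     of_real (sph_norm l m) * sgn (Complex x y) powi m
     * of_real (legendre_flux l m (rC / sphR rC x y) / sphR rC x y ^ (l + 2)))"

lemma v_integrand_eq_v_density:
  assumes "rC > 0" and "p \<noteq> 0"
  shows "v_integrand l m rC p = v_density l m rC p"
proof (cases p)
  case (Pair x y)
  define R where "R = sphR rC x y"
  have "rC < R"
    using sphR_gt assms Pair unfolding R_def by blast
  with assms(1) have u: "0 < rC / R" "rC / R < 1"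
    by (auto simp: field_simps)
  then have "sin (arccos (rC / R)) \<noteq> 0"
    by (intro sin_arccos_nonzero) auto
  moreover have "Complex x y \<noteq> 0"
    using assms(2) Pair by (simp add: complex_eq_iff zero_prod_def)
  then have "cis (of_int m * Arg (Complex x y)) = sgn (Complex x y) powi m"
    by (simp add: cis_Arg flip: cis_power_int)
  ultimately show ?thesis
    using u by (simp add: Pair v_integrand_def v_density_def sphTheta_def sphPhi_def
                          cdot_nu_e_z_legendre_flux flip: R_def)
qed

lemma v_density_rotate: "v_density l m rC (- y, x) = \<i> powi m * v_density l m rC (x, y)"
proof -
  have "sphR rC (- y) x = sphR rC x y"
    by (simp add: sphR_def add.commute)
  moreover have "Complex (- y) x = \<i> * Complex x y"
    by (simp add: complex_eq_iff)
  then have "sgn (Complex (- y) x) = \<i> * sgn (Complex x y)"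
    by (simp add: sgn_mult sgn_div_norm norm_mult)
  ultimately show ?thesis
    by (simp add: v_density_def power_int_mult_distrib)
qed

lemma continuous_on_v_density:
  assumes "rC > 0"
  shows "continuous_on (- {0}) (v_density l m rC)"
proof -
  have R: "rC < sphR rC (fst p) (snd p)" if "p \<in> - {0}" for p
    using sphR_gt[of rC "fst p" "snd p"] that assms by auto
  have R_cont: "continuous_on (- {0}) (\<lambda>p. sphR rC (fst p) (snd p))"
    unfolding sphR_def by (intro continuous_intros)
  have "continuous_on (- {0}) (\<lambda>p. legendre_flux l m (rC / sphR rC (fst p) (snd p)))"
  proof (rule continuous_on_compose2[OF continuous_on_legendre_flux])
    show "continuous_on (- {0}) (\<lambda>p. rC / sphR rC (fst p) (snd p))"
      using R assms by (intro continuous_intros R_cont) force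
    show "(\<lambda>p. rC / sphR rC (fst p) (snd p)) ` (- {0}) \<subseteq> {-1<..<1}"
      using R assms by (force simp: field_simps)
  qed
  moreover have "continuous_on (- {0}) (\<lambda>p::real \<times> real. sgn (Complex (fst p) (snd p)) powi m)"
    unfolding Complex_eq by (intro continuous_intros) (auto simp: complex_eq_iff zero_prod_def)
  ultimately show ?thesis
    unfolding v_density_def case_prod_beta using R assms
    by (intro continuous_on_mult continuous_on_const continuous_on_of_real continuous_on_divide
          continuous_on_power R_cont) force+
qed

lemma bounded_v_density:
  assumes "rC > 0" and "- int l \<le> m"
  shows "bounded (v_density l m rC ` (- {0}))"
proof -
  obtain B where B: "\<forall>u\<in>{0..<1}. \<bar>legendre_flux l m u\<bar> \<le> B"
    using bounded_legendre_flux[OF assms(2)] by (auto simp: bounded_real)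
  have "norm (v_density l m rC p) \<le> \<bar>sph_norm l m\<bar> * (B / rC ^ (l + 2))" if "p \<noteq> 0" for p
  proof (cases p)
    case (Pair x y)
    define R where "R = sphR rC x y"
    have R: "rC < R"
      using sphR_gt assms(1) that Pair unfolding R_def by blast
    with assms(1) have u: "rC / R \<in> {0..<1}"
      by (auto simp: field_simps)
    have "Complex x y \<noteq> 0"
      using that Pair by (simp add: complex_eq_iff zero_prod_def)
    then have "norm (v_density l m rC p)
        = \<bar>sph_norm l m\<bar> * (\<bar>legendre_flux l m (rC / R)\<bar> / R ^ (l + 2))"
      using R assms(1)
      by (simp add: Pair v_density_def norm_mult norm_divide norm_power norm_power_int norm_sgn
                    abs_divide flip: R_def)
    also have "\<dots> \<le> \<bar>sph_norm l m\<bar> * (B / rC ^ (l + 2))"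
    proof -
      have "\<bar>legendre_flux l m (rC / R)\<bar> \<le> B"
        using B u by blast
      moreover have "rC ^ (l + 2) \<le> R ^ (l + 2)"
        using R assms(1) by (intro power_mono) auto
      ultimately show ?thesis
        using assms(1) by (intro mult_left_mono frac_le) auto
    qed
    finally show ?thesis .
  qed
  then show ?thesis
    unfolding bounded_iff by blast
qed

theorem mainTheorem5:
  fixes d rC :: real and l :: nat and m :: int
  assumes "d > 0" and "rC > 0" and "l \<ge> 1"
    and "- int l \<le> m" and "m \<le> int l"
    and "\<not> (4 dvd m)"
  shows "(v_integrand l m rC has_integral 0) (cbox (- d, - d) (d, d))"
proof -
  have "v_density l m rC integrable_on cbox (- d, - d) (d, d)"
    using continuous_on_v_density[OF assms(2)] bounded_v_density[OF assms(2,4)]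
    by (intro integrable_on_cbox_if_bounded_continuous_off_point[where c = 0])
       (auto intro: continuous_on_subset bounded_subset)
  then have "(v_density l m rC has_integral 0) (cbox (- d, - d) (d, d))"
    using v_density_rotate power_int_ii_neq_1[OF assms(6)]
    by (rule has_integral_zero_by_rotation)
  then show ?thesis
    by (rule has_integral_spike[OF negligible_sing[of 0], rotated])
       (simp add: v_integrand_eq_v_density assms(2))
qed

end
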